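(* Let $K>0$, $x_0<\alpha$ be real constants, and let $f$ be a continuous function on $[x_0,\alpha)$ with $f(x)>0$ on $[x_0,\alpha)$ such that either $f$ is decreasing on $[x_0,\alpha)$ or $\lim_{x\to\alpha-0}f(x)=0$. Then for every $w_0>0$ there exists a unique global positive solution $w$ on $[x_0,\alpha)$ of the initial value problem \[ w'+K=\frac{f(x)}{w},\quad x_0<x<\alpha,\qquad w(x_0)=w_0 \] (equivalently, of $(w'+K)w=f(x)$, $x_0<x<\alpha$, $w(x_0)=w_0$). *)

theory Defs
  imports Complex_Main
begin

definition global_pos_solution ::
  "real \<Rightarrow> (real \<Rightarrow> real) \<Rightarrow> real \<Rightarrow> real \<Rightarrow> real \<Rightarrow> (real \<Rightarrow> real) \<Rightarrow> bool" where
  "global_pos_solution K f x0 \<alpha> w0 w \<longleftrightarrow>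
     continuous_on {x0..<\<alpha>} w \<and>
     (\<forall>x\<in>{x0..<\<alpha>}. w x > 0) \<and>
     w x0 = w0 \<and>
     (\<forall>x\<in>{x0<..<\<alpha>}. (w has_real_derivative (f x / w x - K)) (at x))"

end

theory Submission
  imports Defs "HOL-Analysis.Analysis"
begin

text \<open>
  On a compact piece \<open>[x0, b]\<close>, \<open>b < \<alpha>\<close>, the function \<open>f\<close> lies between some \<open>m > 0\<close>
  and \<open>M\<close>. Replacing \<open>w\<close> by \<open>max w \<delta>\<close> in \<open>f x / w\<close>, where \<open>0 < \<delta> \<le> w0\<close> and
  \<open>K \<delta> \<le> m\<close>, makes the right-hand side globally Lipschitz, so Picard's theorem yields a
  solution of the truncated equation; since that right-hand side is nonnegative wherever
  \<open>w < \<delta>\<close>, the solution never drops below \<open>\<delta>\<close> and solves the original equation.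
  On \<open>w \<ge> \<delta>\<close> the map \<open>w \<mapsto> f x / w\<close> is Lipschitz, so a Gronwall estimate gives uniqueness
  on \<open>[x0, b]\<close>, and the solutions on these intervals glue to the global one.
\<close>

lemma continuous_on_compact_pos_lower_bound:
  fixes v :: "'a::topological_space \<Rightarrow> real"
  assumes "compact S" "continuous_on S v" "\<forall>x\<in>S. 0 < v x"
  shows "\<exists>d>0. \<forall>x\<in>S. d \<le> v x"
proof (cases "S = {}")
  case False
  then obtain x where "x \<in> S" "\<forall>y\<in>S. v x \<le> v y"
    using continuous_attains_inf assms(1,2) by blast
  then show ?thesis using assms(3) by blast
qed (auto intro: exI[of _ 1])

lemma continuous_on_compact_abs_bound:
  fixes f :: "'a::topological_space \<Rightarrow> real"
  assumes "compact S" "continuous_on S f"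
  shows "\<exists>M>0. \<forall>x\<in>S. \<bar>f x\<bar> \<le> M"
  using compact_imp_bounded[OF compact_continuous_image[OF assms(2,1)]]
  by (auto simp: bounded_pos)

lemma abs_divide_diff_le:
  fixes c y z \<delta> M :: real
  assumes "\<bar>c\<bar> \<le> M" "0 < \<delta>" "\<delta> \<le> y" "\<delta> \<le> z"
  shows "\<bar>c / y - c / z\<bar> \<le> M / \<delta>\<^sup>2 * \<bar>y - z\<bar>"
proof -
  have "c / y - c / z = c * (z - y) / (y * z)"
    using assms by (simp add: field_simps)
  then have "\<bar>c / y - c / z\<bar> = \<bar>c\<bar> * \<bar>y - z\<bar> / (y * z)"
    using assms by (simp add: abs_mult abs_minus_commute)
  also have "\<dots> \<le> M * \<bar>y - z\<bar> / \<delta>\<^sup>2"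
    using assms by (intro frac_le mult_right_mono) (auto simp: power2_eq_square intro: mult_mono)
  finally show ?thesis by simp
qed

lemma abs_divide_max_diff_le:
  fixes c y z \<delta> M :: real
  assumes "\<bar>c\<bar> \<le> M" "0 < \<delta>"
  shows "\<bar>c / max y \<delta> - c / max z \<delta>\<bar> \<le> M / \<delta>\<^sup>2 * \<bar>y - z\<bar>"
proof -
  have "\<bar>c / max y \<delta> - c / max z \<delta>\<bar> \<le> M / \<delta>\<^sup>2 * \<bar>max y \<delta> - max z \<delta>\<bar>"
    using assms by (intro abs_divide_diff_le) auto
  also have "\<dots> \<le> M / \<delta>\<^sup>2 * \<bar>y - z\<bar>"
    using order_trans[OF abs_ge_zero assms(1)] by (intro mult_left_mono) (auto simp: max_def abs_if)
  finally show ?thesis .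
qed

lemma lipschitz_ode_unique:
  fixes F :: "real \<Rightarrow> real \<Rightarrow> real" and v w :: "real \<Rightarrow> real"
  assumes v: "continuous_on {a..b} v" "\<And>t. t \<in> {a<..<b} \<Longrightarrow> (v has_real_derivative F t (v t)) (at t)"
    and w: "continuous_on {a..b} w" "\<And>t. t \<in> {a<..<b} \<Longrightarrow> (w has_real_derivative F t (w t)) (at t)"
    and init: "v a = w a"
    and lip: "\<And>t. t \<in> {a<..<b} \<Longrightarrow> \<bar>F t (v t) - F t (w t)\<bar> \<le> L * \<bar>v t - w t\<bar>"
  shows "\<forall>x\<in>{a..b}. v x = w x"
proof
  fix x assume x: "x \<in> {a..b}"
  \<comment> \<open>Gronwall: the weighted squared distance \<open>e\<close> is nonincreasing and vanishes at \<open>a\<close>.\<close>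
  define e where "e t = (v t - w t)\<^sup>2 * exp (-2 * L * t)" for t
  have "e x \<le> e a"
  proof (rule DERIV_nonpos_imp_decreasing_open[of a x e])
    show "a \<le> x" using x by simp
    fix t assume t: "a < t" "t < x"
    then have tab: "t \<in> {a<..<b}" using x by simp
    define d where "d = v t - w t"
    define D where "D = F t (v t) - F t (w t)"
    have "d * D \<le> L * d\<^sup>2"
    proof -
      have "d * D \<le> \<bar>d\<bar> * \<bar>D\<bar>" by (simp add: abs_mult[symmetric])
      also have "\<dots> \<le> \<bar>d\<bar> * (L * \<bar>d\<bar>)"
        using lip[OF tab] by (intro mult_left_mono) (auto simp: d_def D_def)
      finally show ?thesis by (simp add: power2_eq_square mult_ac)
    qed
    then have "2 * (d * D - L * d\<^sup>2) * exp (-2 * L * t) \<le> 0"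
      by (simp add: mult_nonpos_nonneg)
    moreover have "(e has_real_derivative 2 * (d * D - L * d\<^sup>2) * exp (-2 * L * t)) (at t)"
      unfolding e_def d_def D_def
      by (rule derivative_eq_intros v(2)[OF tab] w(2)[OF tab] refl | simp)+
        (simp add: algebra_simps power2_eq_square)
    ultimately show "\<exists>y. (e has_real_derivative y) (at t) \<and> y \<le> 0" by blast
  next
    show "continuous_on {a..x} e"
      unfolding e_def using x
      by (intro continuous_intros continuous_on_subset[OF v(1)] continuous_on_subset[OF w(1)]) auto
  qed
  then have "(v x - w x)\<^sup>2 * exp (-2 * L * x) \<le> 0" using init by (simp add: e_def)
  then show "v x = w x" by (simp add: mult_le_0_iff)
qed

lemma bielecki_integral_bound:
  fixes h :: "real \<Rightarrow> real"
  assumes "a \<le> y" "0 < L" "h integrable_on {a..y}"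
    and bound: "\<And>t. t \<in> {a..y} \<Longrightarrow> \<bar>h t\<bar> \<le> L * D * exp (2 * L * (t - a))"
  shows "\<bar>integral {a..y} h\<bar> \<le> D / 2 * exp (2 * L * (y - a))"
proof -
  have "\<bar>h a\<bar> \<le> L * D" using bound[of a] assms(1) by simp
  then have "0 \<le> L * D" by (rule order_trans[OF abs_ge_zero])
  then have D: "0 \<le> D" using assms(2) by (simp add: zero_le_mult_iff)
  have "((\<lambda>t. L * D * exp (2 * L * (t - a))) has_integral
          D / 2 * exp (2 * L * (y - a)) - D / 2 * exp (2 * L * (a - a))) {a..y}"
    (is "(?g has_integral _) _")
  proof (rule fundamental_theorem_of_calculus[OF assms(1)])
    fix t assume "t \<in> {a..y}"
    have "((\<lambda>t. D / 2 * exp (2 * L * (t - a))) has_real_derivative L * D * exp (2 * L * (t - a)))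
            (at t within {a..y})"
      by (auto intro!: derivative_eq_intros)
    then show "((\<lambda>t. D / 2 * exp (2 * L * (t - a))) has_vector_derivative L * D * exp (2 * L * (t - a)))
            (at t within {a..y})"
      by (simp add: has_real_derivative_iff_has_vector_derivative)
  qed
  note g_integral = this
  have "norm (integral {a..y} h) \<le> integral {a..y} ?g"
    using bound has_integral_integrable[OF g_integral]
    by (intro integral_norm_bound_integral[OF assms(3)]) simp_all
  also have "\<dots> = D / 2 * exp (2 * L * (y - a)) - D / 2"
    using integral_unique[OF g_integral] by simp
  finally show ?thesis using D by simp
qed

lemma lipschitz_integral_diff_bound:
  fixes G :: "real \<Rightarrow> real \<Rightarrow> real" and p q :: "real \<Rightarrow> real"
  assumes "a \<le> y" "0 < L"
    and int: "(\<lambda>t. G t (p t)) integrable_on {a..y}" "(\<lambda>t. G t (q t)) integrable_on {a..y}"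
    and G_lip: "\<And>t. t \<in> {a..y} \<Longrightarrow> \<bar>G t (p t) - G t (q t)\<bar> \<le> L * \<bar>p t - q t\<bar>"
    and close: "\<And>t. t \<in> {a..y} \<Longrightarrow> \<bar>p t - q t\<bar> \<le> D * exp (2 * L * (t - a))"
  shows "\<bar>integral {a..y} (\<lambda>t. G t (p t)) - integral {a..y} (\<lambda>t. G t (q t))\<bar>
           \<le> D / 2 * exp (2 * L * (y - a))"
proof -
  have "\<bar>integral {a..y} (\<lambda>t. G t (p t) - G t (q t))\<bar> \<le> D / 2 * exp (2 * L * (y - a))"
  proof (rule bielecki_integral_bound[OF assms(1,2) integrable_diff[OF int]])
    fix t assume t: "t \<in> {a..y}"
    have "L * \<bar>p t - q t\<bar> \<le> L * (D * exp (2 * L * (t - a)))"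
      using close[OF t] assms(2) by (simp add: mult_left_mono)
    then show "\<bar>G t (p t) - G t (q t)\<bar> \<le> L * D * exp (2 * L * (t - a))"
      using G_lip[OF t] by (simp add: mult.assoc)
  qed
  then show ?thesis using int by (simp add: integral_diff)
qed

lemma bcontfun_Icc_contraction_fixpoint:
  fixes g :: "(real \<Rightarrow>\<^sub>C real) \<Rightarrow> real \<Rightarrow> real"
  assumes "a \<le> b" "0 \<le> k" "k < 1"
    and cont: "\<And>\<phi>. continuous_on {a..b} (g \<phi>)"
    and contr: "\<And>\<phi> \<psi> x. x \<in> {a..b} \<Longrightarrow> dist (g \<phi> x) (g \<psi> x) \<le> k * dist \<phi> \<psi>"
  shows "\<exists>\<phi>. \<forall>x\<in>{a..b}. apply_bcontfun \<phi> x = g \<phi> x"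
proof -
  \<comment> \<open>Extend each \<open>g \<phi>\<close> constantly beyond the ends of \<open>[a, b]\<close> to obtain a self-map of \<open>C_b(\<real>)\<close>.\<close>
  have "\<forall>\<phi>. \<exists>h. \<forall>x. apply_bcontfun h x = g \<phi> (clamp a b x)"
    using cont by (metis continuous_on_cbox_bcontfunE cbox_interval)
  then obtain T :: "(real \<Rightarrow>\<^sub>C real) \<Rightarrow> (real \<Rightarrow>\<^sub>C real)"
    where T: "\<forall>\<phi> x. T \<phi> x = g \<phi> (clamp a b x)" by (rule choice[THEN exE])
  have clamp: "clamp a b x \<in> {a..b}" for x
    using clamp_in_interval[of a b x] assms(1) by (simp add: cbox_interval)
  have "dist (T \<phi>) (T \<psi>) \<le> k * dist \<phi> \<psi>" for \<phi> \<psi>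
    by (rule dist_bound) (simp add: T contr[OF clamp])
  then obtain \<phi> where "T \<phi> = \<phi>" using banach_fix_type[of k T] assms(2,3) by auto
  then show ?thesis using T by (metis cbox_interval clamp_cancel_cbox)
qed

lemma lipschitz_integral_equation_solution:
  fixes G :: "real \<Rightarrow> real \<Rightarrow> real"
  assumes ab: "a \<le> b" and L: "0 < L"
    and G_cont: "\<And>u. continuous_on {a..b} u \<Longrightarrow> continuous_on {a..b} (\<lambda>t. G t (u t))"
    and G_lip: "\<And>t y z. t \<in> {a..b} \<Longrightarrow> \<bar>G t y - G t z\<bar> \<le> L * \<bar>y - z\<bar>"
  shows "\<exists>u. continuous_on {a..b} u \<and> (\<forall>x\<in>{a..b}. u x = c + integral {a..x} (\<lambda>t. G t (u t)))"
proof -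
  \<comment> \<open>Contraction in the Bielecki norm: write \<open>u = E * \<phi>\<close> and take sup norms of \<open>\<phi>\<close>.\<close>
  define E where "E t = exp (2 * L * (t - a))" for t
  have E_cont: "continuous_on S E" for S unfolding E_def by (intro continuous_intros)
  define g where "g \<phi> x = (c + integral {a..x} (\<lambda>t. G t (E t * \<phi> t))) / E x"
    for \<phi> :: "real \<Rightarrow>\<^sub>C real" and x
  have int: "(\<lambda>t. G t (E t * \<phi> t)) integrable_on {a..x}"
    if "x \<in> {a..b}" for \<phi> :: "real \<Rightarrow>\<^sub>C real" and x
    using that by (intro integrable_continuous_real continuous_on_subset[OF G_cont])
      (auto intro!: continuous_intros E_cont continuous_on_apply_bcontfun)
  have "continuous_on {a..b} (g \<phi>)" for \<phi>
    unfolding g_def using int ab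
    by (intro continuous_intros indefinite_integral_continuous_1 E_cont) (auto simp: E_def)
  moreover have "\<bar>g \<phi> x - g \<psi> x\<bar> \<le> 1/2 * dist \<phi> \<psi>" if x: "x \<in> {a..b}" for \<phi> \<psi> x
  proof -
    have "\<bar>E t * \<phi> t - E t * \<psi> t\<bar> \<le> dist \<phi> \<psi> * exp (2 * L * (t - a))" for t
    proof -
      have "\<bar>E t * \<phi> t - E t * \<psi> t\<bar> = E t * dist (\<phi> t) (\<psi> t)"
        by (simp add: E_def dist_real_def abs_mult right_diff_distrib[symmetric])
      also have "\<dots> \<le> E t * dist \<phi> \<psi>" by (simp add: E_def dist_bounded)
      finally show ?thesis by (simp add: E_def mult.commute)
    qed
    then have "\<bar>integral {a..x} (\<lambda>t. G t (E t * \<phi> t)) - integral {a..x} (\<lambda>t. G t (E t * \<psi> t))\<bar>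
                 \<le> dist \<phi> \<psi> / 2 * E x"
      unfolding E_def[of x] using x G_lip
      by (intro lipschitz_integral_diff_bound[where G = G, OF _ L int[OF x, of \<phi>] int[OF x, of \<psi>]])
        auto
    then show ?thesis
      by (simp add: g_def E_def diff_divide_distrib[symmetric] divide_le_eq)
  qed
  ultimately obtain \<phi> where "\<forall>x\<in>{a..b}. apply_bcontfun \<phi> x = g \<phi> x"
    using bcontfun_Icc_contraction_fixpoint[OF ab, where g = g and k = "1/2"] by (auto simp: dist_real_def)
  then have "\<forall>x\<in>{a..b}. E x * \<phi> x = c + integral {a..x} (\<lambda>t. G t (E t * \<phi> t))"
    by (simp add: g_def E_def field_simps)
  moreover have "continuous_on {a..b} (\<lambda>x. E x * \<phi> x)"
    by (intro continuous_intros E_cont continuous_on_apply_bcontfun)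
  ultimately show ?thesis by blast
qed

lemma lipschitz_ode_solution:
  fixes G :: "real \<Rightarrow> real \<Rightarrow> real"
  assumes ab: "a \<le> b" and L: "0 < L"
    and G_cont: "\<And>u. continuous_on {a..b} u \<Longrightarrow> continuous_on {a..b} (\<lambda>t. G t (u t))"
    and G_lip: "\<And>t y z. t \<in> {a..b} \<Longrightarrow> \<bar>G t y - G t z\<bar> \<le> L * \<bar>y - z\<bar>"
  shows "\<exists>u. continuous_on {a..b} u \<and> u a = c \<and>
           (\<forall>x\<in>{a<..<b}. (u has_real_derivative G x (u x)) (at x))"
proof -
  obtain u where u_cont: "continuous_on {a..b} u"
    and u_eq: "\<forall>x\<in>{a..b}. u x = c + integral {a..x} (\<lambda>t. G t (u t))"
    using lipschitz_integral_equation_solution[OF ab L G_cont G_lip] by blast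
  have "(u has_real_derivative G x (u x)) (at x)" if x: "x \<in> {a<..<b}" for x
  proof -
    have "((\<lambda>x. c + integral {a..x} (\<lambda>t. G t (u t))) has_real_derivative G x (u x)) (at x)"
      using integral_has_real_derivative[OF G_cont[OF u_cont], of x] at_within_Icc_at[of a x b] x
      by (auto intro!: derivative_eq_intros)
    then show ?thesis
      by (rule has_field_derivative_transform_within_open[of _ _ _ "{a<..<b}"]) (use x u_eq in auto)
  qed
  moreover have "u a = c" using u_eq ab by auto
  ultimately show ?thesis using u_cont by blast
qed

lemma barrier_lower_bound:
  fixes u :: "real \<Rightarrow> real"
  assumes cont: "continuous_on {a..b} u" and start: "\<delta> \<le> u a"
    and rising: "\<And>t. t \<in> {a<..<b} \<Longrightarrow> u t < \<delta> \<Longrightarrow> \<exists>d\<ge>0. (u has_real_derivative d) (at t)"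
    and x: "x \<in> {a..b}"
  shows "\<delta> \<le> u x"
proof (rule ccontr)
  assume below: "\<not> \<delta> \<le> u x"
  define S where "S = {t \<in> {a..x}. \<delta> \<le> u t}"
  have cont_x: "continuous_on {a..x} u" using cont x by (auto elim: continuous_on_subset)
  have "closed S"
    unfolding S_def by (rule continuous_on_closed_Collect_le[OF continuous_on_const cont_x]) simp
  moreover have "bounded S"
    unfolding S_def by (rule bounded_subset[OF compact_imp_bounded[OF compact_Icc[of a x]]]) auto
  ultimately have "compact S" by (simp add: compact_eq_bounded_closed)
  moreover have "a \<in> S" using x start by (simp add: S_def)
  ultimately obtain s where s: "s \<in> S" "\<forall>t\<in>S. t \<le> s"
    using compact_attains_sup by blast
  \<comment> \<open>\<open>s\<close> is the last time at which \<open>u \<ge> \<delta>\<close>; after it \<open>u < \<delta>\<close>, so \<open>u\<close> cannot decrease.\<close>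
  have "u s \<le> u x"
  proof (rule DERIV_nonneg_imp_increasing_open[of s x u])
    show "s \<le> x" using s by (simp add: S_def)
    fix t assume t: "s < t" "t < x"
    then have "t \<notin> S" using s(2) by force
    then have "u t < \<delta>" using s t by (auto simp: S_def)
    then show "\<exists>d. (u has_real_derivative d) (at t) \<and> 0 \<le> d"
      using rising[of t] s t x by (auto simp: S_def)
  next
    show "continuous_on {s..x} u" using cont_x s by (auto simp: S_def elim: continuous_on_subset)
  qed
  then show False using s below by (simp add: S_def)
qed

definition pos_solution_on_Icc ::
  "real \<Rightarrow> (real \<Rightarrow> real) \<Rightarrow> real \<Rightarrow> real \<Rightarrow> real \<Rightarrow> (real \<Rightarrow> real) \<Rightarrow> bool" where
  "pos_solution_on_Icc K f a b w0 w \<longleftrightarrow>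
     continuous_on {a..b} w \<and> (\<forall>x\<in>{a..b}. w x > 0) \<and> w a = w0 \<and>
     (\<forall>x\<in>{a<..<b}. (w has_real_derivative (f x / w x - K)) (at x))"

lemma pos_solution_on_Icc_subinterval:
  assumes "pos_solution_on_Icc K f a b w0 w" "c \<le> b"
  shows "pos_solution_on_Icc K f a c w0 w"
  using assms by (auto simp: pos_solution_on_Icc_def elim: continuous_on_subset)

lemma pos_solution_on_Icc_cong:
  assumes v: "pos_solution_on_Icc K f a b w0 v" and eq: "\<forall>x\<in>{a..b}. v x = w x" and "a \<le> b"
  shows "pos_solution_on_Icc K f a b w0 w"
  unfolding pos_solution_on_Icc_def
proof (intro conjI ballI)
  show "continuous_on {a..b} w"
    using v eq by (auto simp: pos_solution_on_Icc_def intro: continuous_on_eq)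
  fix x assume x: "x \<in> {a<..<b}"
  then have "(v has_real_derivative f x / w x - K) (at x)"
    using v eq by (auto simp: pos_solution_on_Icc_def)
  then show "(w has_real_derivative f x / w x - K) (at x)"
    by (rule has_field_derivative_transform_within_open[of v _ _ "{a<..<b}"]) (use x eq in auto)
qed (use v eq \<open>a \<le> b\<close> in \<open>auto simp: pos_solution_on_Icc_def\<close>)

lemma pos_solution_on_Icc_unique:
  assumes f: "continuous_on {a..b} f"
    and v: "pos_solution_on_Icc K f a b w0 v" and w: "pos_solution_on_Icc K f a b w0 w"
  shows "\<forall>x\<in>{a..b}. v x = w x"
proof -
  obtain \<delta>v where \<delta>v: "0 < \<delta>v" "\<forall>x\<in>{a..b}. \<delta>v \<le> v x"
    using continuous_on_compact_pos_lower_bound[of "{a..b}" v] v by (auto simp: pos_solution_on_Icc_def)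
  obtain \<delta>w where \<delta>w: "0 < \<delta>w" "\<forall>x\<in>{a..b}. \<delta>w \<le> w x"
    using continuous_on_compact_pos_lower_bound[of "{a..b}" w] w by (auto simp: pos_solution_on_Icc_def)
  obtain M where M: "\<forall>x\<in>{a..b}. \<bar>f x\<bar> \<le> M"
    using continuous_on_compact_abs_bound[OF compact_Icc f] by blast
  show ?thesis
  proof (rule lipschitz_ode_unique[where F = "\<lambda>t y. f t / y - K" and L = "M / (min \<delta>v \<delta>w)\<^sup>2"])
    fix t assume "t \<in> {a<..<b}"
    then have t: "t \<in> {a..b}" by simp
    have "min \<delta>v \<delta>w \<le> v t" "min \<delta>v \<delta>w \<le> w t"
      using \<delta>v(2) \<delta>w(2) t by (auto intro: min.coboundedI1 min.coboundedI2)
    then show "\<bar>(f t / v t - K) - (f t / w t - K)\<bar> \<le> M / (min \<delta>v \<delta>w)\<^sup>2 * \<bar>v t - w t\<bar>"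
      using abs_divide_diff_le[of "f t" M "min \<delta>v \<delta>w" "v t" "w t"] M t \<delta>v(1) \<delta>w(1) by simp
  qed (use v w in \<open>auto simp: pos_solution_on_Icc_def\<close>)
qed

lemma pos_solution_on_Icc_exists:
  assumes ab: "a \<le> b" and f_cont: "continuous_on {a..b} f" and f_pos: "\<forall>x\<in>{a..b}. 0 < f x"
    and w0: "0 < w0"
  shows "\<exists>w. pos_solution_on_Icc K f a b w0 w"
proof -
  obtain m where m: "0 < m" "\<forall>x\<in>{a..b}. m \<le> f x"
    using continuous_on_compact_pos_lower_bound[OF compact_Icc f_cont f_pos] by blast
  obtain M where M: "0 < M" "\<forall>x\<in>{a..b}. \<bar>f x\<bar> \<le> M"
    using continuous_on_compact_abs_bound[OF compact_Icc f_cont] by blast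
  define \<delta> where "\<delta> = min w0 (m / max K 1)"
  have \<delta>: "0 < \<delta>" "\<delta> \<le> w0" using w0 m(1) by (auto simp: \<delta>_def)
  have "\<delta> \<le> m / max K 1" by (simp add: \<delta>_def)
  then have "\<delta> * max K 1 \<le> m" by (simp add: le_divide_eq)
  moreover have "K * \<delta> \<le> \<delta> * max K 1" using \<delta>(1) by (simp add: mult.commute)
  ultimately have K\<delta>: "K * \<delta> \<le> m" by linarith
  define G where "G t y = f t / max y \<delta> - K" for t y
  have "\<bar>G t y - G t z\<bar> \<le> M / \<delta>\<^sup>2 * \<bar>y - z\<bar>" if "t \<in> {a..b}" for t y z
    using abs_divide_max_diff_le[of "f t" M \<delta> y z] M that \<delta>(1) by (simp add: G_def)
  moreover have "continuous_on {a..b} (\<lambda>t. G t (u t))" if "continuous_on {a..b} u" for u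
    unfolding G_def using that f_cont \<delta>(1) by (auto intro!: continuous_intros)
  ultimately obtain u where u_cont: "continuous_on {a..b} u" and u_a: "u a = w0"
    and u_deriv: "\<forall>x\<in>{a<..<b}. (u has_real_derivative G x (u x)) (at x)"
    using lipschitz_ode_solution[OF ab, of "M / \<delta>\<^sup>2" G w0] M \<delta> by auto
  have u_ge: "\<delta> \<le> u x" if "x \<in> {a..b}" for x
  proof (rule barrier_lower_bound[OF u_cont _ _ that])
    fix t assume t: "t \<in> {a<..<b}" "u t < \<delta>"
    have "K \<le> f t / \<delta>" using \<delta>(1) K\<delta> m t(1) by (auto simp: field_simps intro: order_trans)
    then have "0 \<le> G t (u t)" using t(2) by (simp add: G_def)
    moreover have "(u has_real_derivative G t (u t)) (at t)" using u_deriv t(1) by blast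
    ultimately show "\<exists>d\<ge>0. (u has_real_derivative d) (at t)" by blast
  qed (simp add: u_a \<delta>)
  have "G x (u x) = f x / u x - K" if "x \<in> {a..b}" for x
    using u_ge[OF that] by (simp add: G_def max_absorb1)
  then have "pos_solution_on_Icc K f a b w0 u"
    unfolding pos_solution_on_Icc_def
    using u_cont u_a u_deriv u_ge \<delta>(1) by (auto intro: less_le_trans)
  then show ?thesis by blast
qed

lemma global_pos_solution_iff_Icc:
  assumes "x0 < \<alpha>"
  shows "global_pos_solution K f x0 \<alpha> w0 w \<longleftrightarrow>
           (\<forall>b\<in>{x0<..<\<alpha>}. pos_solution_on_Icc K f x0 b w0 w)"
proof
  assume "global_pos_solution K f x0 \<alpha> w0 w"
  then show "\<forall>b\<in>{x0<..<\<alpha>}. pos_solution_on_Icc K f x0 b w0 w"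
    by (auto simp: global_pos_solution_def pos_solution_on_Icc_def elim: continuous_on_subset)
next
  assume local: "\<forall>b\<in>{x0<..<\<alpha>}. pos_solution_on_Icc K f x0 b w0 w"
  have mid: "(x + \<alpha>) / 2 \<in> {x0<..<\<alpha>}" "x < (x + \<alpha>) / 2" if "x \<in> {x0..<\<alpha>}" for x
    using that by auto
  show "global_pos_solution K f x0 \<alpha> w0 w"
    unfolding global_pos_solution_def
  proof (intro conjI ballI)
    show "continuous_on {x0..<\<alpha>} w"
      unfolding continuous_on_eq_continuous_within
    proof
      fix x assume x: "x \<in> {x0..<\<alpha>}"
      define b where "b = (x + \<alpha>) / 2"
      have "continuous (at x within {x0..b}) w"
        using local mid[OF x] x
        by (auto simp: b_def pos_solution_on_Icc_def continuous_on_eq_continuous_within)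
      moreover have "at x within {x0..<\<alpha>} = at x within {x0..b}"
        by (rule at_within_nhd[of x "{..<b}"]) (use mid[OF x] x in \<open>auto simp: b_def\<close>)
      ultimately show "continuous (at x within {x0..<\<alpha>}) w" by simp
    qed
  next
    fix x assume "x \<in> {x0..<\<alpha>}"
    then show "0 < w x" using local mid by (fastforce simp: pos_solution_on_Icc_def)
  next
    show "w x0 = w0"
      using local[rule_format, of "(x0 + \<alpha>) / 2"] assms by (auto simp: pos_solution_on_Icc_def)
  next
    fix x assume "x \<in> {x0<..<\<alpha>}"
    then show "(w has_real_derivative f x / w x - K) (at x)"
      using local[rule_format, of "(x + \<alpha>) / 2"] by (auto simp: pos_solution_on_Icc_def)
  qed
qed

lemma global_pos_solution_glue:
  assumes "x0 < \<alpha>"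
    and exists: "\<And>b. b \<in> {x0<..<\<alpha>} \<Longrightarrow> \<exists>w. pos_solution_on_Icc K f x0 b w0 w"
    and unique: "\<And>b v w. b \<in> {x0<..<\<alpha>} \<Longrightarrow> pos_solution_on_Icc K f x0 b w0 v \<Longrightarrow>
                   pos_solution_on_Icc K f x0 b w0 w \<Longrightarrow> \<forall>x\<in>{x0..b}. v x = w x"
  shows "\<exists>w. global_pos_solution K f x0 \<alpha> w0 w"
proof -
  define sol where "sol b = (SOME w. pos_solution_on_Icc K f x0 b w0 w)" for b
  have sol: "pos_solution_on_Icc K f x0 b w0 (sol b)" if "b \<in> {x0<..<\<alpha>}" for b
    unfolding sol_def using exists[OF that] by (rule someI_ex)
  define w where "w x = sol ((x + \<alpha>) / 2) x" for x
  have w_eq: "w x = sol b x" if b: "b \<in> {x0<..<\<alpha>}" and x: "x \<in> {x0..b}" for b x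
  proof -
    define c where "c = min b ((x + \<alpha>) / 2)"
    have c: "c \<in> {x0<..<\<alpha>}" "x \<in> {x0..c}" using b x by (auto simp: c_def)
    have "pos_solution_on_Icc K f x0 c w0 (sol b)"
      and "pos_solution_on_Icc K f x0 c w0 (sol ((x + \<alpha>) / 2))"
      using b x by (auto intro!: pos_solution_on_Icc_subinterval[OF sol] simp: c_def min_def)
    then show ?thesis using unique[OF c(1)] c(2) by (auto simp: w_def)
  qed
  have "pos_solution_on_Icc K f x0 b w0 w" if "b \<in> {x0<..<\<alpha>}" for b
    using pos_solution_on_Icc_cong[OF sol[OF that]] w_eq[OF that] that by auto
  then show ?thesis using global_pos_solution_iff_Icc[OF assms(1)] by blast
qed

lemma global_pos_solution_unique:
  assumes "x0 < \<alpha>" and f: "continuous_on {x0..<\<alpha>} f"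
    and v: "global_pos_solution K f x0 \<alpha> w0 v" and w: "global_pos_solution K f x0 \<alpha> w0 w"
  shows "\<forall>x\<in>{x0..<\<alpha>}. v x = w x"
proof
  fix x assume x: "x \<in> {x0..<\<alpha>}"
  define b where "b = (x + \<alpha>) / 2"
  have b: "b \<in> {x0<..<\<alpha>}" "x \<in> {x0..b}" using x by (auto simp: b_def)
  have "continuous_on {x0..b} f" using f b by (auto elim: continuous_on_subset)
  then show "v x = w x"
    using pos_solution_on_Icc_unique v w b global_pos_solution_iff_Icc[OF assms(1)] by blast
qed

theorem theorem3:
  fixes K x0 \<alpha> :: real and f :: "real \<Rightarrow> real"
  assumes "K > 0" and "x0 < \<alpha>"
    and "continuous_on {x0..<\<alpha>} f"
    and "\<forall>x\<in>{x0..<\<alpha>}. f x > 0"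
    and "antimono_on {x0..<\<alpha>} f \<or> (f \<longlongrightarrow> 0) (at_left \<alpha>)"
  shows "\<forall>w0>0. \<exists>w. global_pos_solution K f x0 \<alpha> w0 w \<and>
           (\<forall>v. global_pos_solution K f x0 \<alpha> w0 v \<longrightarrow> (\<forall>x\<in>{x0..<\<alpha>}. v x = w x))"
proof (intro allI impI)
  fix w0 :: real assume "0 < w0"
  have f_Icc: "continuous_on {x0..b} f" "\<forall>x\<in>{x0..b}. 0 < f x" if "b \<in> {x0<..<\<alpha>}" for b
    using assms(3,4) that by (auto elim: continuous_on_subset)
  have "\<exists>w. pos_solution_on_Icc K f x0 b w0 w" if "b \<in> {x0<..<\<alpha>}" for b
    using pos_solution_on_Icc_exists[OF _ f_Icc[OF that] \<open>0 < w0\<close>] that by simp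
  moreover have "\<forall>x\<in>{x0..b}. u x = v x"
    if "b \<in> {x0<..<\<alpha>}" "pos_solution_on_Icc K f x0 b w0 u" "pos_solution_on_Icc K f x0 b w0 v"
    for b u v
    using pos_solution_on_Icc_unique[OF f_Icc(1)] that by blast
  ultimately obtain w where w: "global_pos_solution K f x0 \<alpha> w0 w"
    using global_pos_solution_glue[OF assms(2)] by blast
  then show "\<exists>w. global_pos_solution K f x0 \<alpha> w0 w \<and>
           (\<forall>v. global_pos_solution K f x0 \<alpha> w0 v \<longrightarrow> (\<forall>x\<in>{x0..<\<alpha>}. v x = w x))"
    using global_pos_solution_unique[OF assms(2,3) _ w] by blast
qed

end
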